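(* Let $G=(V,E)$ be an undirected graph with terminals $s_1,s_2,s_3,s_4\in V$. Let $G'$ be the directed graph with vertex set $V\cup\{s,t\}$ ($s,t$ new) whose arcs are: $(u,v)$ and $(v,u)$ for every edge $uv\in E$, together with the arcs $(s,s_1),(s_1,s),(s_2,s),(s_2,t),(s,s_3),(t,s_3),(t,s_4),(s_4,t)$. Then for every $C\subseteq V\setminus\{s_1,s_2,s_3,s_4\}$: $G-C$ contains no path between $s_i$ and $s_j$ for any $i\neq j$ if and only if $G'-C$ contains no directed path from $s$ to $t$ and no directed path from $t$ to $s$. Consequently, with node weights on $V$ carried over to $G'$ (and terminals $s_1,\dots,s_4,s,t$ not removable), the optimum of 4-terminal node-weighted multiway cut in $G$ equals the optimum node-weighted $st$-bi-cut in $G'$, giving an approximation-preserving reduction from 4-terminal $\textsc{Node-wt-MC}$ to $st$-Bi-Cut.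
   Context: $G-C$ and $G'-C$ denote the graphs obtained by deleting the vertices in $C$. In node-weighted $st$-Bi-Cut, one removes a minimum-weight set of non-terminal vertices so that no directed path from $s$ to $t$ and none from $t$ to $s$ remains. In $\textsc{Node-wt-MC}$ (undirected), one removes a minimum-weight set of non-terminal vertices so that no two distinct terminals remain connected. *)

theory Defs
  imports Main "HOL-Library.Extended_Real"
begin

datatype 'a ext = Old 'a | NewS | NewT

definition restr :: "('v \<times> 'v) set \<Rightarrow> 'v set \<Rightarrow> ('v \<times> 'v) set" where
  "restr R X = {(x, y). (x, y) \<in> R \<and> x \<in> X \<and> y \<in> X}"

(* undirected graph G = (V,E): E is a set of (unordered, represented as ordered) edges;
   u and v are connected in G - C iff there is a path using edges in either direction,
   avoiding vertices of C *)
definition ucon :: "'a set \<Rightarrow> ('a \<times> 'a) set \<Rightarrow> 'a set \<Rightarrow> 'a \<Rightarrow> 'a \<Rightarrow> bool" where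
  "ucon V E C u v \<longleftrightarrow> u \<in> V - C \<and> v \<in> V - C \<and> (u, v) \<in> (restr (E \<union> E\<inverse>) (V - C))\<^sup>*"

definition dreach :: "'v set \<Rightarrow> ('v \<times> 'v) set \<Rightarrow> 'v set \<Rightarrow> 'v \<Rightarrow> 'v \<Rightarrow> bool" where
  "dreach W A C u v \<longleftrightarrow> u \<in> W - C \<and> v \<in> W - C \<and> (u, v) \<in> (restr A (W - C))\<^sup>*"

definition mwc_feasible :: "'a set \<Rightarrow> ('a \<times> 'a) set \<Rightarrow> 'a set \<Rightarrow> 'a set \<Rightarrow> bool" where
  "mwc_feasible V E T C \<longleftrightarrow> C \<subseteq> V - T \<and> (\<forall>x\<in>T. \<forall>y\<in>T. x \<noteq> y \<longrightarrow> \<not> ucon V E C x y)"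

(* feasible node-weighted st-bi-cut; X = non-removable (terminal) vertices *)
definition bicut_feasible :: "'v set \<Rightarrow> ('v \<times> 'v) set \<Rightarrow> 'v set \<Rightarrow> 'v \<Rightarrow> 'v \<Rightarrow> 'v set \<Rightarrow> bool" where
  "bicut_feasible W A X s t C \<longleftrightarrow> C \<subseteq> W - X \<and> \<not> dreach W A C s t \<and> \<not> dreach W A C t s"

(* optimum value (infimum over feasible sets; +infinity if none is feasible) *)
definition opt_val :: "('v \<Rightarrow> real) \<Rightarrow> ('v set \<Rightarrow> bool) \<Rightarrow> ereal" where
  "opt_val w F = Inf ((\<lambda>C. ereal (sum w C)) ` {C. F C})"

definition Gp_vertices :: "'a set \<Rightarrow> 'a ext set" where
  "Gp_vertices V = Old ` V \<union> {NewS, NewT}"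

definition Gp_arcs :: "('a \<times> 'a) set \<Rightarrow> 'a \<Rightarrow> 'a \<Rightarrow> 'a \<Rightarrow> 'a \<Rightarrow> ('a ext \<times> 'a ext) set" where
  "Gp_arcs E s1 s2 s3 s4 =
     {(Old u, Old v) | u v. (u, v) \<in> E} \<union> {(Old v, Old u) | u v. (u, v) \<in> E} \<union>
     {(NewS, Old s1), (Old s1, NewS), (Old s2, NewS), (Old s2, NewT),
      (NewS, Old s3), (NewT, Old s3), (NewT, Old s4), (Old s4, NewT)}"

(* node weights carried over to G' (weights of s,t irrelevant: they are not removable) *)
definition Gp_weight :: "('a \<Rightarrow> real) \<Rightarrow> 'a ext \<Rightarrow> real" where
  "Gp_weight w x = (case x of Old v \<Rightarrow> w v | _ \<Rightarrow> 0)"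

end

theory Submission
  imports Defs
begin

text \<open>
  Deleting \<open>C\<close> leaves all terminals in place, so the hubs \<open>s\<close> and \<open>t\<close> of \<open>G' - C\<close> are joined
  to the components of \<open>G - C\<close> exactly as in \<open>G'\<close>.  A path from \<open>s\<close> to \<open>t\<close> leaves \<open>s\<close> towards
  \<open>s\<^sub>1\<close> or \<open>s\<^sub>3\<close> and enters \<open>t\<close> from \<open>s\<^sub>2\<close> or \<open>s\<^sub>4\<close>; conversely the vertices reachable from \<open>s\<close>
  are \<open>s\<close> itself and the components of \<open>s\<^sub>1\<close> and \<open>s\<^sub>3\<close>, as long as these contain neither \<open>s\<^sub>2\<close>
  nor \<open>s\<^sub>4\<close>.  Hence \<open>s\<close> reaches \<open>t\<close> iff one of \<open>s\<^sub>1, s\<^sub>3\<close> is connected to one of \<open>s\<^sub>2, s\<^sub>4\<close>, and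
  symmetrically \<open>t\<close> reaches \<open>s\<close> iff one of \<open>s\<^sub>3, s\<^sub>4\<close> is connected to one of \<open>s\<^sub>1, s\<^sub>2\<close>.  The
  eight pairs involved cover all six pairs of distinct terminals.  Feasible bi-cuts are thus
  precisely the images of feasible multiway cuts, with the same weights.
\<close>

lemma sym_restr_Un_converse: "sym (restr (E \<union> E\<inverse>) X)"
  by (auto simp: sym_def restr_def)

lemma rtrancl_lift:
  assumes "\<And>u v. (u, v) \<in> R \<Longrightarrow> (f u, f v) \<in> A" and "(x, y) \<in> R\<^sup>*"
  shows "(f x, f y) \<in> A\<^sup>*"
  using assms(2) by induction (auto intro: rtrancl_into_rtrancl assms(1))

lemma rtrancl_through_detour:
  assumes "\<And>u v. (u, v) \<in> R \<Longrightarrow> (f u, f v) \<in> A"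
    and "(a, f x) \<in> A" "(x, y) \<in> R\<^sup>*" "(f y, b) \<in> A"
  shows "(a, b) \<in> A\<^sup>*"
  using rtrancl_lift[OF assms(1,3)] assms(2,4)
  by (meson converse_rtrancl_into_rtrancl rtrancl_into_rtrancl)

lemma not_rtrancl_between_hubs:
  fixes A :: "('a ext \<times> 'a ext) set"
  assumes hubs: "{a, b} = {NewS, NewT}"
    and out_a: "\<And>y. (a, y) \<in> A \<Longrightarrow> y \<in> Old ` P"
    and into_b: "\<And>x. (Old x, b) \<in> A \<Longrightarrow> x \<in> Q"
    and Old_arcs: "\<And>u v. (Old u, Old v) \<in> A \<Longrightarrow> (u, v) \<in> R"
    and separated: "\<forall>p\<in>P. \<forall>q\<in>Q. (p, q) \<notin> R\<^sup>*"
  shows "(a, b) \<notin> A\<^sup>*"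
proof
  assume path: "(a, b) \<in> A\<^sup>*"
  have "a \<noteq> b" and b_not_Old: "\<And>v. b \<noteq> Old v"
    using hubs by (auto simp: doubleton_eq_iff)
  have non_Old: "y = a \<or> y = b" if "\<And>v. y \<noteq> Old v" for y
    using hubs that by (cases y) (auto simp: doubleton_eq_iff)
  \<comment> \<open>\<open>S\<close> is closed under \<open>A\<close>: leaving it would need an arc into \<open>b\<close> from a vertex of \<open>Q\<close>.\<close>
  define S where "S = insert a (Old ` (R\<^sup>* `` P))"
  have "A `` S \<subseteq> S"
  proof
    fix y assume "y \<in> A `` S"
    then obtain x where xy: "(x, y) \<in> A" and "x \<in> S" by blast
    then consider "x = a" | u where "x = Old u" "u \<in> R\<^sup>* `` P" by (auto simp: S_def)
    then show "y \<in> S"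
    proof cases
      case 1
      then show ?thesis using out_a xy by (auto simp: S_def)
    next
      case (2 u)
      show ?thesis
      proof (cases "\<exists>v. y = Old v")
        case True
        then obtain v where "y = Old v" by blast
        with 2 xy Old_arcs have "v \<in> R\<^sup>* `` P" by (blast intro: rtrancl_into_rtrancl)
        then show ?thesis using \<open>y = Old v\<close> by (simp add: S_def)
      next
        case False
        have "y \<noteq> b" using 2 xy into_b separated by blast
        then show ?thesis using non_Old False by (auto simp: S_def)
      qed
    qed
  qed
  moreover have "b \<in> A\<^sup>* `` S" using path by (auto simp: S_def)
  ultimately have "b \<in> S" by (simp add: Image_closed_trancl)
  then show False using \<open>a \<noteq> b\<close> b_not_Old by (auto simp: S_def)
qed

lemma gadget_pairs_cover_all_pairs:
  assumes "sym Q" and "distinct [s1, s2, s3, s4]"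
  shows "(\<forall>x\<in>{s1, s2, s3, s4}. \<forall>y\<in>{s1, s2, s3, s4}. x \<noteq> y \<longrightarrow> (x, y) \<notin> Q)
    \<longleftrightarrow> (\<forall>p\<in>{s1, s3}. \<forall>q\<in>{s2, s4}. (p, q) \<notin> Q) \<and> (\<forall>p\<in>{s3, s4}. \<forall>q\<in>{s1, s2}. (p, q) \<notin> Q)"
    (is "?all \<longleftrightarrow> ?gadget")
proof
  show "?all \<Longrightarrow> ?gadget" using assms(2) by auto
next
  assume ?gadget
  show ?all
  proof (intro ballI impI)
    fix x y assume "x \<in> {s1, s2, s3, s4}" "y \<in> {s1, s2, s3, s4}" "x \<noteq> y"
    then have "(x, y) \<notin> Q \<or> (y, x) \<notin> Q" using \<open>?gadget\<close> by auto
    then show "(x, y) \<notin> Q" using \<open>sym Q\<close> by (blast dest: symD)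
  qed
qed

locale bicut_reduction =
  fixes V :: "'a set" and E :: "('a \<times> 'a) set" and s1 s2 s3 s4 :: 'a and C :: "'a set"
  assumes terminals_in_V: "{s1, s2, s3, s4} \<subseteq> V"
    and cut: "C \<subseteq> V - {s1, s2, s3, s4}"
begin

lemma terminals: "{s1, s2, s3, s4} \<subseteq> V - C"
  using terminals_in_V cut by blast

abbreviation R :: "('a \<times> 'a) set" where
  "R \<equiv> restr (E \<union> E\<inverse>) (V - C)"

abbreviation A :: "('a ext \<times> 'a ext) set" where
  "A \<equiv> restr (Gp_arcs E s1 s2 s3 s4) (Gp_vertices V - Old ` C)"

lemma Old_arc_iff: "(Old u, Old v) \<in> A \<longleftrightarrow> (u, v) \<in> R"
  by (auto simp: restr_def Gp_arcs_def Gp_vertices_def)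

lemma arc_from_NewS_iff: "(NewS, y) \<in> A \<longleftrightarrow> y \<in> {Old s1, Old s3}"
  using terminals by (auto simp: restr_def Gp_arcs_def Gp_vertices_def)

lemma arc_from_NewT_iff: "(NewT, y) \<in> A \<longleftrightarrow> y \<in> {Old s3, Old s4}"
  using terminals by (auto simp: restr_def Gp_arcs_def Gp_vertices_def)

lemma arc_into_NewS_iff: "(x, NewS) \<in> A \<longleftrightarrow> x \<in> {Old s1, Old s2}"
  using terminals by (auto simp: restr_def Gp_arcs_def Gp_vertices_def)

lemma arc_into_NewT_iff: "(x, NewT) \<in> A \<longleftrightarrow> x \<in> {Old s2, Old s4}"
  using terminals by (auto simp: restr_def Gp_arcs_def Gp_vertices_def)

lemma NewS_reaches_NewT_iff:
  "(NewS, NewT) \<in> A\<^sup>* \<longleftrightarrow> (\<exists>p\<in>{s1, s3}. \<exists>q\<in>{s2, s4}. (p, q) \<in> R\<^sup>*)"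
proof
  assume "(NewS, NewT) \<in> A\<^sup>*"
  then show "\<exists>p\<in>{s1, s3}. \<exists>q\<in>{s2, s4}. (p, q) \<in> R\<^sup>*"
    using not_rtrancl_between_hubs[of NewS NewT A "{s1, s3}" "{s2, s4}" R]
    by (auto simp: Old_arc_iff arc_from_NewS_iff arc_into_NewT_iff)
next
  assume "\<exists>p\<in>{s1, s3}. \<exists>q\<in>{s2, s4}. (p, q) \<in> R\<^sup>*"
  then show "(NewS, NewT) \<in> A\<^sup>*"
    using rtrancl_through_detour[of R Old A] Old_arc_iff arc_from_NewS_iff arc_into_NewT_iff
    by blast
qed

lemma NewT_reaches_NewS_iff:
  "(NewT, NewS) \<in> A\<^sup>* \<longleftrightarrow> (\<exists>p\<in>{s3, s4}. \<exists>q\<in>{s1, s2}. (p, q) \<in> R\<^sup>*)"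
proof
  assume "(NewT, NewS) \<in> A\<^sup>*"
  then show "\<exists>p\<in>{s3, s4}. \<exists>q\<in>{s1, s2}. (p, q) \<in> R\<^sup>*"
    using not_rtrancl_between_hubs[of NewT NewS A "{s3, s4}" "{s1, s2}" R]
    by (auto simp: Old_arc_iff arc_from_NewT_iff arc_into_NewS_iff)
next
  assume "\<exists>p\<in>{s3, s4}. \<exists>q\<in>{s1, s2}. (p, q) \<in> R\<^sup>*"
  then show "(NewT, NewS) \<in> A\<^sup>*"
    using rtrancl_through_detour[of R Old A] Old_arc_iff arc_from_NewT_iff arc_into_NewS_iff
    by blast
qed

lemma separated_iff_no_bicut_path:
  assumes "distinct [s1, s2, s3, s4]"
  shows "(\<forall>x\<in>{s1, s2, s3, s4}. \<forall>y\<in>{s1, s2, s3, s4}. x \<noteq> y \<longrightarrow> \<not> ucon V E C x y)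
    \<longleftrightarrow> \<not> dreach (Gp_vertices V) (Gp_arcs E s1 s2 s3 s4) (Old ` C) NewS NewT
      \<and> \<not> dreach (Gp_vertices V) (Gp_arcs E s1 s2 s3 s4) (Old ` C) NewT NewS"
proof -
  have ucon_iff: "ucon V E C x y \<longleftrightarrow> (x, y) \<in> R\<^sup>*" if "x \<in> {s1, s2, s3, s4}" "y \<in> {s1, s2, s3, s4}" for x y
    using terminals that by (auto simp: ucon_def)
  have dreach_iff: "dreach (Gp_vertices V) (Gp_arcs E s1 s2 s3 s4) (Old ` C) a b \<longleftrightarrow> (a, b) \<in> A\<^sup>*"
    if "a \<in> {NewS, NewT}" "b \<in> {NewS, NewT}" for a b
    using that by (auto simp: dreach_def Gp_vertices_def)
  have "(\<forall>x\<in>{s1, s2, s3, s4}. \<forall>y\<in>{s1, s2, s3, s4}. x \<noteq> y \<longrightarrow> (x, y) \<notin> R\<^sup>*)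
    \<longleftrightarrow> (\<forall>p\<in>{s1, s3}. \<forall>q\<in>{s2, s4}. (p, q) \<notin> R\<^sup>*) \<and> (\<forall>p\<in>{s3, s4}. \<forall>q\<in>{s1, s2}. (p, q) \<notin> R\<^sup>*)"
    using sym_rtrancl[OF sym_restr_Un_converse] assms by (rule gadget_pairs_cover_all_pairs)
  then show ?thesis
    using ucon_iff dreach_iff NewS_reaches_NewT_iff NewT_reaches_NewS_iff by simp
qed

lemma bicut_feasible_Old_iff:
  assumes "distinct [s1, s2, s3, s4]"
  shows "bicut_feasible (Gp_vertices V) (Gp_arcs E s1 s2 s3 s4)
      ({NewS, NewT} \<union> Old ` {s1, s2, s3, s4}) NewS NewT (Old ` C)
    \<longleftrightarrow> mwc_feasible V E {s1, s2, s3, s4} C"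
proof -
  have "Old ` C \<subseteq> Gp_vertices V - ({NewS, NewT} \<union> Old ` {s1, s2, s3, s4})"
    using cut by (auto simp: Gp_vertices_def)
  then show ?thesis
    using cut separated_iff_no_bicut_path[OF assms] by (simp add: bicut_feasible_def mwc_feasible_def)
qed

end

lemma bicut_feasible_eq_image_mwc_feasible:
  assumes "{s1, s2, s3, s4} \<subseteq> V" and "distinct [s1, s2, s3, s4]"
  shows "{D. bicut_feasible (Gp_vertices V) (Gp_arcs E s1 s2 s3 s4)
      ({NewS, NewT} \<union> Old ` {s1, s2, s3, s4}) NewS NewT D}
    = image Old ` {C. mwc_feasible V E {s1, s2, s3, s4} C}"
    (is "{D. ?bicut D} = _")
proof (intro set_eqI iffI)
  fix D assume "D \<in> {D. ?bicut D}"
  define C where "C = {v. Old v \<in> D}"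
  have "D = Old ` C" and "C \<subseteq> V - {s1, s2, s3, s4}"
    using \<open>D \<in> {D. ?bicut D}\<close> by (auto simp: C_def bicut_feasible_def Gp_vertices_def)
  then interpret bicut_reduction V E s1 s2 s3 s4 C
    using assms(1) by unfold_locales
  show "D \<in> image Old ` {C. mwc_feasible V E {s1, s2, s3, s4} C}"
    using \<open>D \<in> {D. ?bicut D}\<close> \<open>D = Old ` C\<close> bicut_feasible_Old_iff[OF assms(2)] by blast
next
  fix D assume "D \<in> image Old ` {C. mwc_feasible V E {s1, s2, s3, s4} C}"
  then obtain C where "D = Old ` C" and "mwc_feasible V E {s1, s2, s3, s4} C" by blast
  then have "C \<subseteq> V - {s1, s2, s3, s4}" by (simp add: mwc_feasible_def)
  then interpret bicut_reduction V E s1 s2 s3 s4 C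
    using assms(1) by unfold_locales
  show "D \<in> {D. ?bicut D}"
    using \<open>D = Old ` C\<close> \<open>mwc_feasible V E {s1, s2, s3, s4} C\<close> bicut_feasible_Old_iff[OF assms(2)]
    by blast
qed

lemma opt_val_image:
  assumes "{D. F' D} = f ` {C. F C}" and "\<And>C. sum w' (f C) = sum w C"
  shows "opt_val w' F' = opt_val w F"
  unfolding opt_val_def assms(1) image_image assms(2) ..

theorem mainTheorem7:
  fixes V :: "'a set" and E :: "('a \<times> 'a) set" and s1 s2 s3 s4 :: 'a and w :: "'a \<Rightarrow> real"
  assumes "finite V" and "E \<subseteq> V \<times> V"
    and "s1 \<in> V" "s2 \<in> V" "s3 \<in> V" "s4 \<in> V"
    and "distinct [s1, s2, s3, s4]"
  shows "(\<forall>C. C \<subseteq> V - {s1, s2, s3, s4} \<longrightarrow>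
            ((\<forall>x\<in>{s1, s2, s3, s4}. \<forall>y\<in>{s1, s2, s3, s4}. x \<noteq> y \<longrightarrow> \<not> ucon V E C x y)
             \<longleftrightarrow> (\<not> dreach (Gp_vertices V) (Gp_arcs E s1 s2 s3 s4) (Old ` C) NewS NewT
                  \<and> \<not> dreach (Gp_vertices V) (Gp_arcs E s1 s2 s3 s4) (Old ` C) NewT NewS)))
       \<and> opt_val w (mwc_feasible V E {s1, s2, s3, s4}) =
         opt_val (Gp_weight w)
           (bicut_feasible (Gp_vertices V) (Gp_arcs E s1 s2 s3 s4)
              ({NewS, NewT} \<union> Old ` {s1, s2, s3, s4}) NewS NewT)"
proof (intro conjI allI impI)
  have terminals: "{s1, s2, s3, s4} \<subseteq> V" using assms(3-6) by simp
  {
    fix C assume "C \<subseteq> V - {s1, s2, s3, s4}"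
    then interpret bicut_reduction V E s1 s2 s3 s4 C
      using terminals by unfold_locales
    show "(\<forall>x\<in>{s1, s2, s3, s4}. \<forall>y\<in>{s1, s2, s3, s4}. x \<noteq> y \<longrightarrow> \<not> ucon V E C x y)
      \<longleftrightarrow> \<not> dreach (Gp_vertices V) (Gp_arcs E s1 s2 s3 s4) (Old ` C) NewS NewT
        \<and> \<not> dreach (Gp_vertices V) (Gp_arcs E s1 s2 s3 s4) (Old ` C) NewT NewS"
      using separated_iff_no_bicut_path[OF assms(7)] .
  }
  note bicut_feasible_eq_image_mwc_feasible[OF terminals assms(7)]
  moreover have "sum (Gp_weight w) (Old ` C) = sum w C" for C
    by (simp add: sum.reindex inj_on_def Gp_weight_def)
  ultimately show "opt_val w (mwc_feasible V E {s1, s2, s3, s4}) =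
    opt_val (Gp_weight w) (bicut_feasible (Gp_vertices V) (Gp_arcs E s1 s2 s3 s4)
      ({NewS, NewT} \<union> Old ` {s1, s2, s3, s4}) NewS NewT)"
    by (rule opt_val_image[symmetric])
qed

end
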